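(* Let $f^j(t,x):=\nabla_{A^*}\Gamma^{ji}_{(0,x_0)}(t,x)$ for $t\neq0$ (fixed $x_0\in{\mathbf R}^n$, $i$). For $R>0$, $$\iint_{R<|(t,x)-(0,x_0)|<2R} |f(t,x)|^2 dtdx\lesssim R^{1-n}.$$ In particular, for $1\le p<(n+1)/n$, we have $f\in L_p^{\mathrm{loc}}({\mathbf R}^{1+n})$ and $$\iint_{|(t,x)-(0,x_0)|<R} |f(t,x)|^p dtdx\lesssim R^{1-n(p-1)}.$$
   Context: $n,m\ge1$; $A\in L_\infty({\mathbf R}^n;{\mathcal L}({\mathbf C}^{m(1+n)}))$ is $t$-independent, accretive, and solutions of $\mathrm{div}\,A\nabla u=0$ satisfy Moser local boundedness. $\Gamma_{(t_0,x_0)}(t,x)$, $t\ne t_0$, is constructed via functional calculus: with $D=\begin{bmatrix}0&\mathrm{div}_x\\-\nabla_x&0\end{bmatrix}$, $B=\begin{bmatrix} A_{\perp\perp}^{-1} & -A_{\perp\perp}^{-1}A_{\perp\parallel} \\ A_{\parallel\perp}A_{\perp\perp}^{-1} & A_{\parallel\parallel}- A_{\parallel\perp}A_{\perp\perp}^{-1}A_{\perp\parallel}\end{bmatrix}$, $N=\mathrm{diag}(-I,I)$ and $\widetilde E^\pm_A$ the spectral projections of $BD$, for $t_0>0$ it is the weak solution of $\mathrm{div}\,A^*\nabla\Gamma^i=0$ in ${\mathbf R}^{1+n}_-$ with $\int(\nabla_{A^*}\Gamma^{ji}(0,x),Nv_0^j(x))dx=(e^{-t_0BD}v_0)^i_\perp(x_0)$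 for $v_0\in\widetilde E^+_AL_2$ (analogously for $t_0<0$), extended by translation in $t$. It satisfies $\int_{|x-x_0|>R}|\nabla_{A^*}\Gamma_{(t_0,x_0)}(t,x)|^2dx\lesssim(R+|t-t_0|)^{-n}$. Here $\nabla_{A^*}\Gamma=[\partial_{\nu_{A^*}}\Gamma,\nabla_x\Gamma]^t$. *)

theory Defs
  imports "HOL-Analysis.Analysis"
begin

text \<open>Abstract form of the off-diagonal decay of the conormal gradient of the
fundamental solution with pole at (0, x0): points of R^{1+n} are pairs (t, x)
with t :: real and x :: real^'n; values lie in C^k (k = m(1+n)).\<close>

definition offdiag_decay ::
  "(real \<times> (real^'n) \<Rightarrow> complex^'k) \<Rightarrow> real^'n \<Rightarrow> real \<Rightarrow> bool" where
  "offdiag_decay f x0 C0 \<longleftrightarrow>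
     f \<in> borel_measurable lborel \<and>
     (\<forall>t R. t \<noteq> 0 \<longrightarrow> R > 0 \<longrightarrow>
        (\<integral>\<^sup>+ x\<in>{x. dist x x0 > R}. ennreal ((norm (f (t, x)))\<^sup>2) \<partial>lborel)
          \<le> ennreal (C0 * (R + \<bar>t\<bar>) powr (- real CARD('n))))"

definition Lp_loc :: "real \<Rightarrow> (real \<times> (real^'n) \<Rightarrow> complex^'k) \<Rightarrow> bool" where
  "Lp_loc p f \<longleftrightarrow> f \<in> borel_measurable lborel \<and>
     (\<forall>K. compact K \<longrightarrow> (\<integral>\<^sup>+ z\<in>K. ennreal (norm (f z) powr p) \<partial>lborel) < \<infinity>)"

end

theory Submission
  imports Defs
begin

text \<open>Letting the radius in the decay hypothesis tend to zero bounds each slice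
\<open>\<integral> |f(t,x)|^2 dx\<close> by \<open>C0 |t|^(-n)\<close>. The dyadic annulus \<open>R \<le> |(t,x) - (0,x0)| \<le> 2R\<close> is
covered by the slab \<open>R/2 \<le> |t| \<le> 2R\<close> and the region \<open>|t| \<le> 2R, |x - x0| > R/2\<close>; on both,
every slice contributes at most \<open>C0 (R/2)^(-n)\<close> over a \<open>t\<close>-range of length \<open>4R\<close>, which gives
the \<open>L2\<close> bound \<open>R^(1-n)\<close>. For \<open>p \<le> 2\<close> the pointwise inequality \<open>a^p \<le> s^(p-2) a^2 + s^p\<close>
with \<open>s = R^(-n)\<close> turns this into the bound \<open>R^(1-n(p-1))\<close> for \<open>|f|^p\<close> on the annulus. The
exponent \<open>1 - n(p-1)\<close> is positive exactly when \<open>p < (n+1)/n\<close>, and then these bounds, taken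
over the dyadic annuli exhausting the punctured ball, form a convergent geometric series.\<close>

definition dyadic_annulus :: "'a::metric_space \<Rightarrow> real \<Rightarrow> 'a set" where
  "dyadic_annulus c r = {z. r \<le> dist z c \<and> dist z c \<le> 2 * r}"

lemma dyadic_annulus_sets [measurable]:
  "dyadic_annulus (c::'a::euclidean_space) r \<in> sets lborel"
  unfolding dyadic_annulus_def by measurable

lemma dyadic_annulus_subset_cball: "dyadic_annulus c r \<subseteq> cball c (2 * r)"
  by (auto simp: dyadic_annulus_def dist_commute)

lemma dyadic_annulus_Pair_cases:
  fixes t r :: real and x x0 :: "'a::metric_space"
  assumes "(t, x) \<in> dyadic_annulus (0, x0) r"
  shows "\<bar>t\<bar> \<le> 2 * r \<and> (r / 2 \<le> \<bar>t\<bar> \<or> r / 2 < dist x x0)"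
proof -
  have d: "dist (t, x) (0, x0) \<le> \<bar>t\<bar> + dist x x0"
    using dist_triangle[of "(t, x)" "(0, x0)" "(0, x)"] by (simp add: dist_Pair_Pair dist_real_def)
  have "\<bar>t\<bar> \<le> dist (t, x) (0, x0)"
    using dist_fst_le[of "(t, x)" "(0, x0)"] by (simp add: dist_real_def)
  moreover have "r \<le> dist (t, x) (0, x0)" "dist (t, x) (0, x0) \<le> 2 * r"
    using assms by (simp_all add: dyadic_annulus_def)
  ultimately show ?thesis using d by linarith
qed

lemma exists_dyadic_scale:
  fixes d R :: real
  assumes "0 < d" "d < R"
  obtains k where "R / 2 ^ Suc k \<le> d" "d \<le> 2 * (R / 2 ^ Suc k)"
proof -
  obtain N where "R / d < 2 ^ N" using real_arch_pow[of 2 "R / d"] by auto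
  then have "R / 2 ^ N \<le> d" using assms by (simp add: field_simps)
  then have ex: "\<exists>m. R / 2 ^ m \<le> d" ..
  define m where "m = (LEAST m. R / 2 ^ m \<le> d)"
  have m: "R / 2 ^ m \<le> d" unfolding m_def using LeastI_ex[OF ex] .
  then have "m \<noteq> 0" using assms by (intro notI) simp
  then obtain k where k: "m = Suc k" by (cases m) auto
  have "\<not> R / 2 ^ k \<le> d" by (rule not_less_Least) (simp add: k[unfolded m_def])
  then show thesis using that m k by auto
qed

lemma powr_le_split:
  fixes a s p :: real
  assumes "0 \<le> a" "0 < s" "0 \<le> p" "p \<le> 2"
  shows "a powr p \<le> s powr (p - 2) * a\<^sup>2 + s powr p"
proof (cases "a \<le> s")
  case True
  then have "a powr p \<le> s powr p" using assms by (intro powr_mono2) auto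
  then show ?thesis by (simp add: add_increasing)
next
  case False
  then have "a powr p = a powr (p - 2) * a powr 2"
    by (simp add: powr_add[symmetric])
  also have "\<dots> = a powr (p - 2) * a\<^sup>2"
    using False assms by (simp add: powr_realpow)
  also have "\<dots> \<le> s powr (p - 2) * a\<^sup>2"
    using False assms by (intro mult_right_mono powr_mono2') auto
  finally show ?thesis by (simp add: add_increasing2)
qed

lemma subcritical_exponent:
  fixes n p :: real
  assumes "1 \<le> n" "p < (n + 1) / n"
  shows "0 < 1 - n * (p - 1)" "p \<le> 2"
proof -
  have "p * n < n + 1"
    using assms by (simp add: field_simps)
  then show "0 < 1 - n * (p - 1)"
    by (simp add: algebra_simps)
  show "p \<le> 2"
  proof (rule ccontr)
    assume "\<not> p \<le> 2"
    then have "2 * n \<le> p * n" using assms by (intro mult_right_mono) auto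
    with \<open>p * n < n + 1\<close> \<open>1 \<le> n\<close> show False by linarith
  qed
qed

lemma nn_integral_lborel_Pair:
  fixes h :: "real \<times> 'a::euclidean_space \<Rightarrow> ennreal"
  assumes "h \<in> borel_measurable lborel"
  shows "integral\<^sup>N lborel h = (\<integral>\<^sup>+t. \<integral>\<^sup>+x. h (t, x) \<partial>lborel \<partial>lborel)"
  using lborel.nn_integral_fst[of h lborel] assms by (simp add: lborel_prod)

lemma borel_measurable_Pair2:
  fixes f :: "real \<times> 'a::euclidean_space \<Rightarrow> 'b::topological_space"
  assumes "f \<in> borel_measurable lborel"
  shows "(\<lambda>x. f (t, x)) \<in> borel_measurable lborel"
proof -
  have "f \<in> borel_measurable (lborel \<Otimes>\<^sub>M lborel)"
    using assms by (simp add: lborel_prod)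
  then show ?thesis by (rule measurable_Pair2) simp
qed

lemma nn_integral_le_of_punctured_bound:
  fixes h :: "'a::euclidean_space \<Rightarrow> ennreal"
  assumes [measurable]: "h \<in> borel_measurable lborel"
    and bound: "\<And>r. r > 0 \<Longrightarrow> (\<integral>\<^sup>+x\<in>{x. dist x c > r}. h x \<partial>lborel) \<le> B"
  shows "(\<integral>\<^sup>+x. h x \<partial>lborel) \<le> B"
proof -
  define A where "A k = {x. dist x c > 1 / Suc k}" for k :: nat
  have A_sets [measurable]: "A k \<in> sets lborel" for k
    unfolding A_def by measurable
  have "1 / real (Suc (Suc k)) \<le> 1 / real (Suc k)" for k
    by (simp add: frac_le)
  then have "incseq A"
    unfolding A_def by (intro incseq_SucI subsetI) (auto intro: le_less_trans)
  have "(\<Union>k. A k) = - {c}"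
  proof (intro equalityI subsetI)
    fix x assume "x \<in> - {c}"
    then obtain k where "1 / Suc k < dist x c" by (metis ComplD dist_pos_lt insertI1 nat_approx_posE)
    then show "x \<in> (\<Union>k. A k)" by (auto simp: A_def)
  qed (auto simp: A_def)
  then have "(\<integral>\<^sup>+x. h x \<partial>lborel) = (\<integral>\<^sup>+x. h x * indicator (\<Union>k. A k) x \<partial>lborel)"
    by (intro nn_integral_cong_AE) (use AE_lborel_singleton[of c] in \<open>auto elim!: eventually_mono\<close>)
  also have "\<dots> = emeasure (density lborel h) (\<Union>k. A k)"
    using A_sets by (intro emeasure_density[symmetric]) auto
  also have "\<dots> = (SUP k. emeasure (density lborel h) (A k))"
    using A_sets \<open>incseq A\<close> by (intro SUP_emeasure_incseq[symmetric]) auto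
  also have "\<dots> \<le> B"
    by (intro SUP_least) (simp add: emeasure_density A_def bound)
  finally show ?thesis .
qed

lemma nn_integral_indicator_Times_le:
  fixes g :: "real \<times> 'a::euclidean_space \<Rightarrow> ennreal"
  assumes [measurable]: "g \<in> borel_measurable lborel" "T \<in> sets lborel" "X \<in> sets lborel"
    and slice: "AE t in lborel. t \<in> T \<longrightarrow> (\<integral>\<^sup>+x\<in>X. g (t, x) \<partial>lborel) \<le> B"
  shows "(\<integral>\<^sup>+z\<in>T \<times> X. g z \<partial>lborel) \<le> B * emeasure lborel T"
proof -
  have [measurable]: "T \<times> X \<in> sets lborel"
    by (simp add: lborel_prod[symmetric])
  have "(\<integral>\<^sup>+z\<in>T \<times> X. g z \<partial>lborel) = (\<integral>\<^sup>+t. \<integral>\<^sup>+x. g (t, x) * indicator (T \<times> X) (t, x) \<partial>lborel \<partial>lborel)"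
    by (rule nn_integral_lborel_Pair) measurable
  also have "\<dots> = (\<integral>\<^sup>+t. (\<integral>\<^sup>+x\<in>X. g (t, x) \<partial>lborel) * indicator T t \<partial>lborel)"
  proof (rule nn_integral_cong)
    fix t
    have [measurable]: "(\<lambda>x. g (t, x)) \<in> borel_measurable lborel"
      by (rule borel_measurable_Pair2) measurable
    have "(\<integral>\<^sup>+x. g (t, x) * indicator (T \<times> X) (t, x) \<partial>lborel) = (\<integral>\<^sup>+x. (g (t, x) * indicator X x) * indicator T t \<partial>lborel)"
      by (simp add: indicator_times mult_ac)
    also have "\<dots> = (\<integral>\<^sup>+x\<in>X. g (t, x) \<partial>lborel) * indicator T t"
      by (rule nn_integral_multc) measurable
    finally show "(\<integral>\<^sup>+x. g (t, x) * indicator (T \<times> X) (t, x) \<partial>lborel) = (\<integral>\<^sup>+x\<in>X. g (t, x) \<partial>lborel) * indicator T t" .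
  qed
  also have "\<dots> \<le> (\<integral>\<^sup>+t. B * indicator T t \<partial>lborel)"
    using slice by (intro nn_integral_mono_AE) (auto elim!: eventually_mono split: split_indicator)
  also have "\<dots> = B * emeasure lborel T"
    by (rule nn_integral_cmult_indicator) measurable
  finally show ?thesis .
qed

lemma nn_integral_powr_le_L2:
  fixes g :: "'a \<Rightarrow> 'b::real_normed_vector"
  assumes [measurable]: "g \<in> borel_measurable M" "S \<in> sets M"
    and "0 < s" "0 \<le> p" "p \<le> 2"
  shows "(\<integral>\<^sup>+z\<in>S. ennreal (norm (g z) powr p) \<partial>M)
    \<le> ennreal (s powr (p - 2)) * (\<integral>\<^sup>+z\<in>S. ennreal ((norm (g z))\<^sup>2) \<partial>M) + ennreal (s powr p) * emeasure M S"
proof -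
  have "(\<integral>\<^sup>+z\<in>S. ennreal (norm (g z) powr p) \<partial>M)
      \<le> (\<integral>\<^sup>+z. ennreal (s powr (p - 2)) * (ennreal ((norm (g z))\<^sup>2) * indicator S z)
              + ennreal (s powr p) * indicator S z \<partial>M)"
  proof (intro nn_integral_mono)
    fix z
    have "norm (g z) powr p \<le> s powr (p - 2) * (norm (g z))\<^sup>2 + s powr p"
      using assms by (intro powr_le_split) auto
    then have "ennreal (norm (g z) powr p) \<le> ennreal (s powr (p - 2)) * ennreal ((norm (g z))\<^sup>2) + ennreal (s powr p)"
      by (simp add: ennreal_mult[symmetric] ennreal_plus[symmetric] del: ennreal_plus)
    then show "ennreal (norm (g z) powr p) * indicator S z
        \<le> ennreal (s powr (p - 2)) * (ennreal ((norm (g z))\<^sup>2) * indicator S z) + ennreal (s powr p) * indicator S z"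
      by (simp split: split_indicator)
  qed
  also have "\<dots> = ennreal (s powr (p - 2)) * (\<integral>\<^sup>+z\<in>S. ennreal ((norm (g z))\<^sup>2) \<partial>M) + ennreal (s powr p) * emeasure M S"
    by (simp add: nn_integral_add nn_integral_cmult nn_integral_cmult_indicator)
  finally show ?thesis .
qed

lemma nn_integral_ball_le_of_dyadic_annuli:
  fixes h :: "'a::euclidean_space \<Rightarrow> ennreal"
  assumes [measurable]: "h \<in> borel_measurable lborel" and "0 < e" "0 \<le> M" "0 < R"
    and annuli: "\<And>\<rho>. 0 < \<rho> \<Longrightarrow> (\<integral>\<^sup>+z\<in>dyadic_annulus c \<rho>. h z \<partial>lborel) \<le> ennreal (M * \<rho> powr e)"
  shows "(\<integral>\<^sup>+z\<in>ball c R. h z \<partial>lborel) \<le> ennreal (M / (2 powr e - 1) * R powr e)"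
proof -
  define q :: real where "q = 1 / 2 powr e"
  have "1 < 2 powr e"
    using \<open>0 < e\<close> by (intro gr_one_powr) auto
  then have "0 < q" "q < 1" by (simp_all add: q_def)
  define r where "r k = R / 2 ^ Suc k" for k
  have "0 < r k" for k using \<open>0 < R\<close> by (simp add: r_def)
  have "(\<integral>\<^sup>+z\<in>ball c R. h z \<partial>lborel) \<le> (\<integral>\<^sup>+z. (\<Sum>k. h z * indicator (dyadic_annulus c (r k)) z) \<partial>lborel)"
    using AE_lborel_singleton[of c]
  proof (intro nn_integral_mono_AE, elim eventually_mono)
    fix z assume "z \<noteq> c"
    show "h z * indicator (ball c R) z \<le> (\<Sum>k. h z * indicator (dyadic_annulus c (r k)) z)"
    proof (cases "z \<in> ball c R")
      case True
      with \<open>z \<noteq> c\<close> have "0 < dist z c" "dist z c < R" by (auto simp: dist_commute)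
      then obtain k where "z \<in> dyadic_annulus c (r k)"
        by (rule exists_dyadic_scale) (auto simp: dyadic_annulus_def r_def)
      then have "h z * indicator (ball c R) z = h z * indicator (dyadic_annulus c (r k)) z"
        using True by simp
      also have "\<dots> \<le> (\<Sum>k. h z * indicator (dyadic_annulus c (r k)) z)"
        using sum_le_suminf[OF summableI, of "{k}" "\<lambda>j. h z * indicator (dyadic_annulus c (r j)) z"]
        by (simp del: sum_mult_indicator)
      finally show ?thesis .
    qed simp
  qed
  also have "\<dots> = (\<Sum>k. \<integral>\<^sup>+z\<in>dyadic_annulus c (r k). h z \<partial>lborel)"
    by (rule nn_integral_suminf) measurable
  also have "\<dots> \<le> (\<Sum>k. ennreal (M * R powr e * q ^ Suc k))"
  proof (intro suminf_le summableI)
    fix k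
    have "((2::real) ^ Suc k) powr e = (2 powr real (Suc k)) powr e"
      by (simp only: powr_realpow[of 2, symmetric] zero_less_numeral)
    also have "\<dots> = (2 powr e) ^ Suc k"
      by (subst powr_power) (simp_all add: powr_powr)
    finally have "((2::real) ^ Suc k) powr e = (2 powr e) ^ Suc k" .
    then have "r k powr e = R powr e * q ^ Suc k"
      using \<open>0 < R\<close> by (simp add: r_def q_def powr_divide power_one_over)
    then show "(\<integral>\<^sup>+z\<in>dyadic_annulus c (r k). h z \<partial>lborel) \<le> ennreal (M * R powr e * q ^ Suc k)"
      using annuli[OF \<open>0 < r k\<close>] by (simp add: mult.assoc)
  qed
  also have "\<dots> = ennreal (M * R powr e * (q / (1 - q)))"
  proof (rule suminf_ennreal_eq)
    show "0 \<le> M * R powr e * q ^ Suc k" for k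
      using \<open>0 \<le> M\<close> \<open>0 < q\<close> by simp
    have "(\<lambda>k. q ^ k) sums (1 / (1 - q))"
      using \<open>0 < q\<close> \<open>q < 1\<close> by (intro geometric_sums) simp
    from sums_mult[OF this, of "M * R powr e * q"]
    show "(\<lambda>k. M * R powr e * q ^ Suc k) sums (M * R powr e * (q / (1 - q)))"
      by (simp add: mult_ac)
  qed
  also have "q / (1 - q) = 1 / (2 powr e - 1)"
    using \<open>1 < 2 powr e\<close> by (simp add: q_def field_simps)
  finally show ?thesis by (simp add: mult_ac)
qed

lemma Lp_locI_ball:
  fixes f :: "real \<times> (real^'n) \<Rightarrow> complex^'k"
  assumes "f \<in> borel_measurable lborel"
    and "\<And>r. 0 < r \<Longrightarrow> (\<integral>\<^sup>+z\<in>ball c r. ennreal (norm (f z) powr p) \<partial>lborel) < \<infinity>"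
  shows "Lp_loc p f"
  unfolding Lp_loc_def
proof (intro conjI allI impI)
  fix K :: "(real \<times> (real^'n)) set" assume "compact K"
  then obtain r where "0 < r" "K \<subseteq> ball c r"
    using compact_imp_bounded bounded_subset_ballD by blast
  then have "(\<integral>\<^sup>+z\<in>K. ennreal (norm (f z) powr p) \<partial>lborel) \<le> (\<integral>\<^sup>+z\<in>ball c r. ennreal (norm (f z) powr p) \<partial>lborel)"
    by (intro nn_integral_mono) (auto split: split_indicator)
  also have "\<dots> < \<infinity>" using assms(2)[OF \<open>0 < r\<close>] .
  finally show "(\<integral>\<^sup>+z\<in>K. ennreal (norm (f z) powr p) \<partial>lborel) < \<infinity>" .
qed (fact assms(1))

lemma offdiag_decay_measurable:
  "offdiag_decay f x0 C0 \<Longrightarrow> f \<in> borel_measurable lborel"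
  by (simp add: offdiag_decay_def)

lemma offdiag_decay_slice_bound:
  fixes f :: "real \<times> (real^'n) \<Rightarrow> complex^'k"
  assumes od: "offdiag_decay f x0 C0" and "t \<noteq> 0" "0 \<le> C0"
  shows "(\<integral>\<^sup>+x. ennreal ((norm (f (t, x)))\<^sup>2) \<partial>lborel) \<le> ennreal (C0 * \<bar>t\<bar> powr - real CARD('n))"
proof (rule nn_integral_le_of_punctured_bound)
  show "(\<lambda>x. ennreal ((norm (f (t, x)))\<^sup>2)) \<in> borel_measurable lborel"
    using borel_measurable_Pair2[OF offdiag_decay_measurable[OF od]] by measurable
  fix r :: real assume "r > 0"
  then have "(\<integral>\<^sup>+x\<in>{x. dist x x0 > r}. ennreal ((norm (f (t, x)))\<^sup>2) \<partial>lborel)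
      \<le> ennreal (C0 * (r + \<bar>t\<bar>) powr - real CARD('n))"
    using od \<open>t \<noteq> 0\<close> by (simp add: offdiag_decay_def)
  also have "\<dots> \<le> ennreal (C0 * \<bar>t\<bar> powr - real CARD('n))"
    using \<open>r > 0\<close> \<open>t \<noteq> 0\<close> \<open>0 \<le> C0\<close> by (intro ennreal_leI mult_left_mono powr_mono2') auto
  finally show "(\<integral>\<^sup>+x\<in>{x. dist x x0 > r}. ennreal ((norm (f (t, x)))\<^sup>2) \<partial>lborel)
      \<le> ennreal (C0 * \<bar>t\<bar> powr - real CARD('n))" .
qed

lemma offdiag_decay_slab_bound:
  fixes f :: "real \<times> (real^'n) \<Rightarrow> complex^'k"
  assumes od: "offdiag_decay f x0 C0" and "0 \<le> C0" "0 < a"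
    and T_sets: "T \<in> sets lborel" and away: "\<And>t. t \<in> T \<Longrightarrow> a \<le> \<bar>t\<bar>"
  shows "(\<integral>\<^sup>+z\<in>T \<times> UNIV. ennreal ((norm (f z))\<^sup>2) \<partial>lborel) \<le> ennreal (C0 * a powr - real CARD('n)) * emeasure lborel T"
proof (rule nn_integral_indicator_Times_le)
  show "(\<lambda>z. ennreal ((norm (f z))\<^sup>2)) \<in> borel_measurable lborel"
    using offdiag_decay_measurable[OF od] by measurable
  show "AE t in lborel. t \<in> T \<longrightarrow>
      (\<integral>\<^sup>+x\<in>UNIV. ennreal ((norm (f (t, x)))\<^sup>2) \<partial>lborel) \<le> ennreal (C0 * a powr - real CARD('n))"
  proof (intro AE_I2 impI)
    fix t assume "t \<in> T"
    with away \<open>0 < a\<close> have "t \<noteq> 0" "a \<le> \<bar>t\<bar>" by force+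
    have "(\<integral>\<^sup>+x. ennreal ((norm (f (t, x)))\<^sup>2) \<partial>lborel) \<le> ennreal (C0 * \<bar>t\<bar> powr - real CARD('n))"
      by (rule offdiag_decay_slice_bound[OF od \<open>t \<noteq> 0\<close> \<open>0 \<le> C0\<close>])
    also have "\<dots> \<le> ennreal (C0 * a powr - real CARD('n))"
      using \<open>0 < a\<close> \<open>0 \<le> C0\<close> \<open>a \<le> \<bar>t\<bar>\<close> by (intro ennreal_leI mult_left_mono powr_mono2') auto
    finally show "(\<integral>\<^sup>+x\<in>UNIV. ennreal ((norm (f (t, x)))\<^sup>2) \<partial>lborel) \<le> ennreal (C0 * a powr - real CARD('n))"
      by simp
  qed
qed (fact T_sets, simp)

lemma offdiag_decay_far_bound:
  fixes f :: "real \<times> (real^'n) \<Rightarrow> complex^'k"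
  assumes od: "offdiag_decay f x0 C0" and "0 \<le> C0" "0 < a" and T_sets: "T \<in> sets lborel"
  shows "(\<integral>\<^sup>+z\<in>T \<times> {x. dist x x0 > a}. ennreal ((norm (f z))\<^sup>2) \<partial>lborel)
    \<le> ennreal (C0 * a powr - real CARD('n)) * emeasure lborel T"
proof (rule nn_integral_indicator_Times_le)
  show "(\<lambda>z. ennreal ((norm (f z))\<^sup>2)) \<in> borel_measurable lborel"
    using offdiag_decay_measurable[OF od] by measurable
  show "AE t in lborel. t \<in> T \<longrightarrow>
      (\<integral>\<^sup>+x\<in>{x. dist x x0 > a}. ennreal ((norm (f (t, x)))\<^sup>2) \<partial>lborel) \<le> ennreal (C0 * a powr - real CARD('n))"
    using AE_lborel_singleton[of 0]
  proof (rule eventually_mono, intro impI)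
    fix t :: real assume "t \<noteq> 0"
    with od \<open>0 < a\<close> have "(\<integral>\<^sup>+x\<in>{x. dist x x0 > a}. ennreal ((norm (f (t, x)))\<^sup>2) \<partial>lborel)
        \<le> ennreal (C0 * (a + \<bar>t\<bar>) powr - real CARD('n))"
      unfolding offdiag_decay_def by blast
    also have "\<dots> \<le> ennreal (C0 * a powr - real CARD('n))"
      using \<open>0 < a\<close> \<open>0 \<le> C0\<close> by (intro ennreal_leI mult_left_mono powr_mono2') auto
    finally show "(\<integral>\<^sup>+x\<in>{x. dist x x0 > a}. ennreal ((norm (f (t, x)))\<^sup>2) \<partial>lborel)
        \<le> ennreal (C0 * a powr - real CARD('n))" .
  qed
qed (fact T_sets, measurable)

lemma offdiag_decay_annulus_L2_bound:
  fixes f :: "real \<times> (real^'n) \<Rightarrow> complex^'k"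
  assumes od: "offdiag_decay f x0 C0" and "0 \<le> C0" "0 < R"
  shows "(\<integral>\<^sup>+z\<in>dyadic_annulus (0, x0) R. ennreal ((norm (f z))\<^sup>2) \<partial>lborel)
    \<le> ennreal (8 * 2 powr real CARD('n) * C0 * R powr (1 - real CARD('n)))"
proof -
  define n where "n = real CARD('n)"
  define g where "g z = ennreal ((norm (f z))\<^sup>2)" for z
  define T where "T = {-2 * R..2 * R}"
  define Slab where "Slab = {t \<in> T. R / 2 \<le> \<bar>t\<bar>} \<times> (UNIV :: (real^'n) set)"
  define Far where "Far = T \<times> {x. dist x x0 > R / 2}"
  define b where "b = C0 * (R / 2) powr - n * (4 * R)"
  have b_eq: "ennreal (C0 * (R / 2) powr - n) * ennreal (4 * R) = ennreal b"
    using \<open>0 < R\<close> \<open>0 \<le> C0\<close> by (simp add: b_def ennreal_mult)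
  have T_sets [measurable]: "T \<in> sets lborel" and "{t \<in> T. R / 2 \<le> \<bar>t\<bar>} \<in> sets lborel"
    unfolding T_def by measurable
  have mT: "emeasure lborel T = ennreal (4 * R)"
    using \<open>0 < R\<close> by (simp add: T_def)
  have "(\<integral>\<^sup>+z\<in>Slab. g z \<partial>lborel) \<le> ennreal (C0 * (R / 2) powr - n) * emeasure lborel {t \<in> T. R / 2 \<le> \<bar>t\<bar>}"
    unfolding Slab_def g_def n_def using \<open>0 < R\<close> \<open>{t \<in> T. R / 2 \<le> \<bar>t\<bar>} \<in> sets lborel\<close>
    by (intro offdiag_decay_slab_bound[OF od \<open>0 \<le> C0\<close>]) auto
  also have "\<dots> \<le> ennreal b"
    unfolding b_eq[symmetric] mT[symmetric] by (intro mult_left_mono emeasure_mono) (auto simp: T_def)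
  finally have Slab_bound: "(\<integral>\<^sup>+z\<in>Slab. g z \<partial>lborel) \<le> ennreal b" .
  have Far_bound: "(\<integral>\<^sup>+z\<in>Far. g z \<partial>lborel) \<le> ennreal b"
    unfolding Far_def g_def n_def b_eq[symmetric] mT[symmetric] using \<open>0 < R\<close>
    by (intro offdiag_decay_far_bound[OF od \<open>0 \<le> C0\<close> _ T_sets]) auto
  have [measurable]: "g \<in> borel_measurable lborel"
    unfolding g_def using offdiag_decay_measurable[OF od] by measurable
  have "{x. dist x x0 > R / 2} \<in> sets lborel"
    by measurable
  then have [measurable]: "Slab \<in> sets lborel" "Far \<in> sets lborel"
    using \<open>{t \<in> T. R / 2 \<le> \<bar>t\<bar>} \<in> sets lborel\<close> T_sets
    by (simp_all add: Slab_def Far_def lborel_prod[symmetric])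
  have "(\<integral>\<^sup>+z\<in>dyadic_annulus (0, x0) R. g z \<partial>lborel) \<le> (\<integral>\<^sup>+z. g z * indicator Slab z + g z * indicator Far z \<partial>lborel)"
  proof (intro nn_integral_mono)
    fix z :: "real \<times> (real^'n)"
    have "indicator (dyadic_annulus (0, x0) R) z \<le> (indicator Slab z + indicator Far z :: ennreal)"
      using dyadic_annulus_Pair_cases[of "fst z" "snd z" x0 R]
      by (cases z) (auto simp: Slab_def Far_def T_def abs_le_iff split: split_indicator)
    then show "g z * indicator (dyadic_annulus (0, x0) R) z \<le> g z * indicator Slab z + g z * indicator Far z"
      by (simp add: distrib_left[symmetric] mult_left_mono)
  qed
  also have "\<dots> = (\<integral>\<^sup>+z\<in>Slab. g z \<partial>lborel) + (\<integral>\<^sup>+z\<in>Far. g z \<partial>lborel)"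
    by (rule nn_integral_add) measurable
  also have "\<dots> \<le> ennreal b + ennreal b"
    using Slab_bound Far_bound by (rule add_mono)
  also have "\<dots> = ennreal (8 * 2 powr n * C0 * R powr (1 - n))"
  proof -
    have "b + b = 8 * 2 powr n * C0 * R powr (1 - n)"
      using \<open>0 < R\<close> by (simp add: b_def powr_divide powr_minus powr_diff field_simps)
    moreover have "0 \<le> b"
      using \<open>0 < R\<close> \<open>0 \<le> C0\<close> by (simp add: b_def)
    ultimately show ?thesis
      by (simp only: ennreal_plus[symmetric])
  qed
  finally show ?thesis by (simp add: g_def n_def)
qed

lemma offdiag_decay_annulus_Lp_bound:
  fixes f :: "real \<times> (real^'n) \<Rightarrow> complex^'k"
  assumes od: "offdiag_decay f x0 C0" and "0 \<le> C0" "0 < \<rho>" "0 \<le> p" "p \<le> 2"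
  shows "(\<integral>\<^sup>+z\<in>dyadic_annulus (0, x0) \<rho>. ennreal (norm (f z) powr p) \<partial>lborel)
    \<le> ennreal ((8 * 2 powr real CARD('n) * C0 + unit_ball_vol (real (Suc CARD('n))) * 2 ^ Suc CARD('n))
                * \<rho> powr (1 - real CARD('n) * (p - 1)))"
proof -
  define n where "n = CARD('n)"
  define K where "K = 8 * 2 powr real n * C0"
  define V where "V = unit_ball_vol (real (Suc n))"
  define s where "s = \<rho> powr - real n"
  have "0 < s" "0 \<le> K" "0 \<le> V"
    using \<open>0 < \<rho>\<close> \<open>0 \<le> C0\<close> by (simp_all add: s_def K_def V_def unit_ball_vol_nonneg)
  have "emeasure lborel (dyadic_annulus (0::real, x0) \<rho>) \<le> emeasure lborel (cball (0::real, x0) (2 * \<rho>))"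
    by (rule emeasure_mono[OF dyadic_annulus_subset_cball]) simp
  also have "\<dots> = ennreal (V * (2 * \<rho>) ^ Suc n)"
    using \<open>0 < \<rho>\<close> by (subst emeasure_cball) (auto simp: V_def n_def)
  finally have volume: "emeasure lborel (dyadic_annulus (0::real, x0) \<rho>) \<le> ennreal (V * (2 * \<rho>) ^ Suc n)" .
  have "(\<integral>\<^sup>+z\<in>dyadic_annulus (0, x0) \<rho>. ennreal (norm (f z) powr p) \<partial>lborel)
      \<le> ennreal (s powr (p - 2)) * (\<integral>\<^sup>+z\<in>dyadic_annulus (0, x0) \<rho>. ennreal ((norm (f z))\<^sup>2) \<partial>lborel)
        + ennreal (s powr p) * emeasure lborel (dyadic_annulus (0::real, x0) \<rho>)"
    by (intro nn_integral_powr_le_L2 offdiag_decay_measurable[OF od] dyadic_annulus_sets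
          \<open>0 < s\<close> \<open>0 \<le> p\<close> \<open>p \<le> 2\<close>)
  also have "\<dots> \<le> ennreal (s powr (p - 2)) * ennreal (K * \<rho> powr (1 - real n))
        + ennreal (s powr p) * ennreal (V * (2 * \<rho>) ^ Suc n)"
    using offdiag_decay_annulus_L2_bound[OF od \<open>0 \<le> C0\<close> \<open>0 < \<rho>\<close>] volume
    by (intro add_mono mult_left_mono) (auto simp: K_def n_def)
  also have "\<dots> = ennreal ((K + V * 2 ^ Suc n) * \<rho> powr (1 - real n * (p - 1)))"
  proof -
    have "s powr (p - 2) * \<rho> powr (1 - real n) = \<rho> powr (1 - real n * (p - 1))"
      using \<open>0 < \<rho>\<close> by (simp add: s_def powr_powr powr_add[symmetric] algebra_simps)
    moreover have "s powr p * \<rho> ^ Suc n = \<rho> powr (1 - real n * (p - 1))"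
    proof -
      have "\<rho> ^ Suc n = \<rho> powr (real n + 1)"
        using powr_realpow[OF \<open>0 < \<rho>\<close>, of "Suc n"] by (simp add: add.commute)
      then show ?thesis
        using \<open>0 < \<rho>\<close> by (simp add: s_def powr_powr powr_add[symmetric] algebra_simps)
    qed
    moreover have "s powr (p - 2) * (K * \<rho> powr (1 - real n)) + s powr p * (V * (2 * \<rho>) ^ Suc n)
        = K * (s powr (p - 2) * \<rho> powr (1 - real n)) + V * 2 ^ Suc n * (s powr p * \<rho> ^ Suc n)"
      by (simp only: power_mult_distrib mult_ac)
    ultimately have "s powr (p - 2) * (K * \<rho> powr (1 - real n)) + s powr p * (V * (2 * \<rho>) ^ Suc n)
        = (K + V * 2 ^ Suc n) * \<rho> powr (1 - real n * (p - 1))"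
      by (simp add: algebra_simps)
    then show ?thesis
      using \<open>0 < s\<close> \<open>0 \<le> K\<close> \<open>0 \<le> V\<close> \<open>0 < \<rho>\<close>
      by (simp add: ennreal_mult[symmetric] ennreal_plus[symmetric] del: ennreal_plus)
  qed
  finally show ?thesis by (simp add: K_def V_def n_def)
qed

lemma offdiag_decay_ball_Lp_bound:
  fixes f :: "real \<times> (real^'n) \<Rightarrow> complex^'k"
  assumes od: "offdiag_decay f x0 C0" and "0 \<le> C0" "0 < R"
    and p: "1 \<le> p" "p < (real CARD('n) + 1) / real CARD('n)"
  shows "(\<integral>\<^sup>+z\<in>ball (0, x0) R. ennreal (norm (f z) powr p) \<partial>lborel)
    \<le> ennreal ((8 * 2 powr real CARD('n) * C0 + unit_ball_vol (real (Suc CARD('n))) * 2 ^ Suc CARD('n))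
                / (2 powr (1 - real CARD('n) * (p - 1)) - 1) * R powr (1 - real CARD('n) * (p - 1)))"
proof -
  have "0 < 1 - real CARD('n) * (p - 1)" "p \<le> 2"
    using subcritical_exponent[of "real CARD('n)" p] p by auto
  show ?thesis
  proof (rule nn_integral_ball_le_of_dyadic_annuli)
    show "(\<lambda>z. ennreal (norm (f z) powr p)) \<in> borel_measurable lborel"
      using offdiag_decay_measurable[OF od] by measurable
    show "0 \<le> 8 * 2 powr real CARD('n) * C0 + unit_ball_vol (real (Suc CARD('n))) * 2 ^ Suc CARD('n)"
      using \<open>0 \<le> C0\<close> by (simp add: unit_ball_vol_nonneg)
    show "(\<integral>\<^sup>+z\<in>dyadic_annulus (0, x0) \<rho>. ennreal (norm (f z) powr p) \<partial>lborel)
        \<le> ennreal ((8 * 2 powr real CARD('n) * C0 + unit_ball_vol (real (Suc CARD('n))) * 2 ^ Suc CARD('n))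
                    * \<rho> powr (1 - real CARD('n) * (p - 1)))" if "0 < \<rho>" for \<rho>
      using \<open>0 < \<rho>\<close> \<open>1 \<le> p\<close> \<open>p \<le> 2\<close> by (intro offdiag_decay_annulus_Lp_bound[OF od \<open>0 \<le> C0\<close>]) simp_all
  qed fact+
qed

lemma offdiag_decay_Lp_loc:
  fixes f :: "real \<times> (real^'n) \<Rightarrow> complex^'k"
  assumes od: "offdiag_decay f x0 C0" and "0 \<le> C0"
    and p: "1 \<le> p" "p < (real CARD('n) + 1) / real CARD('n)"
  shows "Lp_loc p f"
  using offdiag_decay_measurable[OF od] offdiag_decay_ball_Lp_bound[OF od \<open>0 \<le> C0\<close> _ p]
  by (intro Lp_locI_ball[where c = "(0, x0)"]) (auto intro: le_less_trans[OF _ ennreal_less_top])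

theorem proposition5p1:
  fixes C0 :: real
  assumes "C0 > 0"
  shows "(\<exists>C. \<forall>(f :: real \<times> (real^'n) \<Rightarrow> complex^'k) x0. offdiag_decay f x0 C0 \<longrightarrow>
            (\<forall>R>0. (\<integral>\<^sup>+ z\<in>{z. R < dist z (0, x0) \<and> dist z (0, x0) < 2 * R}.
                       ennreal ((norm (f z))\<^sup>2) \<partial>lborel)
                    \<le> ennreal (C * R powr (1 - real CARD('n)))))
       \<and> (\<forall>p::real. 1 \<le> p \<and> p < (real CARD('n) + 1) / real CARD('n) \<longrightarrow>
            (\<exists>C. \<forall>(f :: real \<times> (real^'n) \<Rightarrow> complex^'k) x0. offdiag_decay f x0 C0 \<longrightarrow>
               Lp_loc p f \<and>
               (\<forall>R>0. (\<integral>\<^sup>+ z\<in>ball (0, x0) R. ennreal (norm (f z) powr p) \<partial>lborel)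
                       \<le> ennreal (C * R powr (1 - real CARD('n) * (p - 1))))))"
proof -
  have "0 \<le> C0" using assms by simp
  have open_annulus: "(\<integral>\<^sup>+ z\<in>{z. R < dist z (0, x0) \<and> dist z (0, x0) < 2 * R}. ennreal ((norm (f z))\<^sup>2) \<partial>lborel)
      \<le> (\<integral>\<^sup>+ z\<in>dyadic_annulus (0, x0) R. ennreal ((norm (f z))\<^sup>2) \<partial>lborel)"
    for f :: "real \<times> (real^'n) \<Rightarrow> complex^'k" and x0 R
    by (intro nn_integral_mono) (auto simp: dyadic_annulus_def split: split_indicator)
  show ?thesis
    using open_annulus offdiag_decay_annulus_L2_bound offdiag_decay_ball_Lp_bound offdiag_decay_Lp_loc \<open>0 \<le> C0\<close>
    by (blast intro: order_trans)
qed

end
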